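(* If $\mathcal C_1$ and $\mathcal C_2$ are Baker classes, then $\mathcal C_1\oplus\mathcal C_2$ is a Baker class.
   Context: A layering of a graph $G$ is a function $\lambda:V(G)\to\mathbb{Z}$ with $|\lambda(u)-\lambda(v)|\le1$ for every edge $uv$. An ordered graph is a finite graph with a linear ordering of its vertices; subgraphs inherit the restricted ordering. For an infinite sequence $\mathbf r=r_1,r_2,\dots$ of positive integers and an integer $s\ge0$, let $\mathrm{tail}_s(\mathbf r)=r_{s+1},r_{s+2},\dots$, $\mathrm{tail}(\mathbf r)=\mathrm{tail}_1(\mathbf r)$ and $\mathrm{head}(\mathbf r)=r_1$. The Baker game between Destroyer and Preserver has states $(G,\mathbf r)$ with $G$ an ordered graph and $\mathbf r$ an infinite sequence of positive integers. If $V(G)=\emptyset$ the game stops. Otherwise, in one round Destroyer chooses either Delete (the smallest vertex $v$ of $G$ is removed and the game proceeds to $(G-v,\mathrm{tail}(\mathbf r))$) or Restrict (Destroyer chooses a layering $\lambda$ of $G$, Preserver chooses an interval $I$ of at most $\mathrm{head}(\mathbf r)$ consecutive integers, and the game proceeds to $(G[\lambda^{-1}(I)],\mathrm{tail}(\mathbf r))$). Destroyer wins on $(G,\mathbf r)$ in $t$ rounds if he has a strategy such that, regardless of Preserver's choices, the game stops after at most $t$ rounds. A class $\mathcal C$ of ordered graphs is a Baker class if for every infinite sequence $\mathbf r$ of positive integers there is an integer $t$ such that for every $G\in\mathcal C$, Destroyer wins the Baker game on $(G,\mathbf r)$ in $t$ rounds. For classes $\mathcal C_1,\mathcal C_2$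 of ordered graphs, $\mathcal C_1\oplus\mathcal C_2$ is the class of ordered graphs $G$ for which there exists a set $B\subseteq V(G)$ (a base) such that $G[B]\in\mathcal C_1$ and, for each component $C$ of $G-B$: $G[C]\in\mathcal C_2$, the set $K_C$ of vertices of $B$ having a neighbor in $C$ induces a clique, and every vertex of $K_C$ is smaller than every vertex of $C$. *)

theory Defs
  imports Main
begin

text \<open>An ordered graph: a finite vertex set with the order inherited from the
linearly ordered vertex type, and a set of edges, each a 2-element subset of the
vertex set.\<close>

type_synonym 'a ograph = "'a set \<times> 'a set set"

definition verts :: "'a ograph \<Rightarrow> 'a set" where "verts G = fst G"
definition edges :: "'a ograph \<Rightarrow> 'a set set" where "edges G = snd G"

definition ordered_graph :: "('a::linorder) ograph \<Rightarrow> bool" where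
  "ordered_graph G \<longleftrightarrow> finite (verts G) \<and>
     (\<forall>e\<in>edges G. \<exists>u v. u \<in> verts G \<and> v \<in> verts G \<and> u \<noteq> v \<and> e = {u, v})"

definition induce :: "'a ograph \<Rightarrow> 'a set \<Rightarrow> 'a ograph" where
  "induce G S = (verts G \<inter> S, {e \<in> edges G. e \<subseteq> S})"

definition layering :: "'a ograph \<Rightarrow> ('a \<Rightarrow> int) \<Rightarrow> bool" where
  "layering G lam \<longleftrightarrow> (\<forall>u v. {u, v} \<in> edges G \<longrightarrow> \<bar>lam u - lam v\<bar> \<le> 1)"

definition tail :: "(nat \<Rightarrow> nat) \<Rightarrow> (nat \<Rightarrow> nat)" where
  "tail r = (\<lambda>i. r (Suc i))"

definition head :: "(nat \<Rightarrow> nat) \<Rightarrow> nat" where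
  "head r = r 0"

definition delete_min :: "('a::linorder) ograph \<Rightarrow> 'a ograph" where
  "delete_min G = induce G (- {Min (verts G)})"

text \<open>Preserver's interval is \<open>{a..<a + m}\<close> with \<open>m \<le> head r\<close> consecutive integers.\<close>
primrec destroyer_wins :: "('a::linorder) ograph \<Rightarrow> (nat \<Rightarrow> nat) \<Rightarrow> nat \<Rightarrow> bool" where
  "destroyer_wins G r 0 \<longleftrightarrow> verts G = {}"
| "destroyer_wins G r (Suc t) \<longleftrightarrow> verts G = {} \<or>
     destroyer_wins (delete_min G) (tail r) t \<or>
     (\<exists>lam. layering G lam \<and>
        (\<forall>(a::int) (m::nat). m \<le> head r \<longrightarrow>
           destroyer_wins (induce G (lam -` {a..<a + int m})) (tail r) t))"

definition baker_class :: "('a::linorder) ograph set \<Rightarrow> bool" where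
  "baker_class C \<longleftrightarrow> (\<forall>r::nat \<Rightarrow> nat. (\<forall>i. 0 < r i) \<longrightarrow>
      (\<exists>t. \<forall>G\<in>C. destroyer_wins G r t))"

definition adj_in :: "'a ograph \<Rightarrow> 'a set \<Rightarrow> 'a \<Rightarrow> 'a \<Rightarrow> bool" where
  "adj_in G S x y \<longleftrightarrow> x \<in> S \<and> y \<in> S \<and> {x, y} \<in> edges G"

definition components_in :: "'a ograph \<Rightarrow> 'a set \<Rightarrow> 'a set set" where
  "components_in G S = {C. \<exists>v\<in>S. C = {w. (adj_in G S)\<^sup>*\<^sup>* v w}}"

definition is_clique :: "'a ograph \<Rightarrow> 'a set \<Rightarrow> bool" where
  "is_clique G K \<longleftrightarrow> (\<forall>x\<in>K. \<forall>y\<in>K. x \<noteq> y \<longrightarrow> {x, y} \<in> edges G)"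

definition attach :: "'a ograph \<Rightarrow> 'a set \<Rightarrow> 'a set \<Rightarrow> 'a set" where
  "attach G B C = {b\<in>B. \<exists>c\<in>C. {b, c} \<in> edges G}"

definition oplus :: "('a::linorder) ograph set \<Rightarrow> 'a ograph set \<Rightarrow> 'a ograph set" where
  "oplus C1 C2 = {G. ordered_graph G \<and> (\<exists>B. B \<subseteq> verts G \<and> induce G B \<in> C1 \<and>
      (\<forall>C\<in>components_in G (verts G - B).
          induce G C \<in> C2 \<and> is_clique G (attach G B C) \<and>
          (\<forall>x\<in>attach G B C. \<forall>y\<in>C. x < y)))}"

end

theory Submission
  imports Defs
begin

text \<open>Destroyer alternates two kinds of rounds. In a separating round he gives layer 0 to the
base and to the components of \<open>G - B\<close> attached to what is left of the base, and places every
other component alone at a multiple of \<open>head r + 1\<close>; Preserver's interval then keeps either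
this attached part or a single component, where the strategy for \<open>C\<^sub>2\<close> takes over. In the
other rounds he copies his strategy for \<open>C\<^sub>1\<close> on the base: a deletion removes a base vertex,
since each component lies above its attachment set, and a layering of the base extends to the
attached part by giving each component the layer of one attachment vertex, which is legitimate
because the attachment set is a clique. With \<open>t\<^sub>1\<close> rounds for \<open>C\<^sub>1\<close> against the odd terms of
\<open>r\<close> and \<open>N\<close> rounds for \<open>C\<^sub>2\<close> against every shift of \<open>r\<close> by at most \<open>2 t\<^sub>1 + 1\<close>, Destroyer
wins in \<open>2 t\<^sub>1 + 1 + N\<close> rounds.\<close>

lemma verts_induce [simp]: "verts (induce G X) = verts G \<inter> X"
  by (simp add: induce_def verts_def)

lemma edges_induce [simp]: "edges (induce G X) = {e \<in> edges G. e \<subseteq> X}"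
  by (simp add: induce_def edges_def)

lemma induce_induce [simp]: "induce (induce G X) Y = induce G (X \<inter> Y)"
  by (auto simp: induce_def verts_def edges_def)

lemma induce_UNIV [simp]: "induce G UNIV = G"
  by (simp add: induce_def verts_def edges_def)

lemma ordered_graph_edge_subset:
  assumes "ordered_graph G" "e \<in> edges G"
  shows "e \<subseteq> verts G"
proof -
  obtain u v where "u \<in> verts G" "v \<in> verts G" "e = {u, v}"
    using assms unfolding ordered_graph_def by meson
  then show ?thesis by simp
qed

lemma ordered_graph_edge_verts:
  "ordered_graph G \<Longrightarrow> {u, v} \<in> edges G \<Longrightarrow> u \<in> verts G \<and> v \<in> verts G"
  using ordered_graph_edge_subset[of G "{u, v}"] by simp

lemma induce_cong:
  "ordered_graph G \<Longrightarrow> X \<inter> verts G = Y \<inter> verts G \<Longrightarrow> induce G X = induce G Y"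
  unfolding induce_def using ordered_graph_edge_subset[of G] by (simp; blast)

lemma delete_min_induce:
  "delete_min (induce G X) = induce G (X \<inter> - {Min (verts G \<inter> X)})"
  by (simp add: delete_min_def)

lemma destroyer_wins_if_empty: "verts G = {} \<Longrightarrow> destroyer_wins G r t"
  by (cases t) auto

lemma destroyer_wins_mono:
  "destroyer_wins G r t \<Longrightarrow> t \<le> t' \<Longrightarrow> destroyer_wins G r t'"
proof (induction t arbitrary: G r t')
  case 0
  then show ?case by (simp add: destroyer_wins_if_empty)
next
  case (Suc t)
  obtain t'' where t'': "t' = Suc t''" "t \<le> t''"
    using Suc.prems(2) by (cases t') auto
  have IH: "destroyer_wins H q t''" if "destroyer_wins H q t" for H :: "('a::linorder) ograph" and q
    using Suc.IH[OF that t''(2)] .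
  show ?case
    using Suc.prems(1) unfolding t''(1) destroyer_wins.simps(2) by (blast intro: IH)
qed

lemma multiples_in_short_interval_eq:
  fixes a h m p q :: int
  assumes "a \<le> p * h" "p * h < a + m" "a \<le> q * h" "q * h < a + m" "m \<le> h"
  shows "p = q"
proof -
  have "0 < h" using assms by linarith
  moreover have "\<bar>p - q\<bar> * \<bar>h\<bar> < 1 * h"
    using assms unfolding abs_mult[symmetric] left_diff_distrib by linarith
  ultimately show ?thesis by (simp add: mult_less_cancel_right)
qed

section \<open>Components of \<open>G - B\<close>\<close>

definition component :: "'a ograph \<Rightarrow> 'a set \<Rightarrow> 'a \<Rightarrow> 'a set" where
  "component G B x = {w. (adj_in G (verts G - B))\<^sup>*\<^sup>* x w}"

definition component_closed :: "'a ograph \<Rightarrow> 'a set \<Rightarrow> 'a set \<Rightarrow> bool" where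
  "component_closed G B S \<longleftrightarrow> (\<forall>x \<in> S \<inter> (verts G - B). component G B x \<subseteq> S)"

lemma in_component_self: "x \<in> component G B x"
  by (simp add: component_def)

lemma component_eq:
  assumes "y \<in> component G B x"
  shows "component G B y = component G B x"
proof -
  have sym: "symp (adj_in G (verts G - B))"
    unfolding symp_def adj_in_def by (simp add: insert_commute)
  have "(adj_in G (verts G - B))\<^sup>*\<^sup>* x y"
    using assms by (simp add: component_def)
  moreover then have "(adj_in G (verts G - B))\<^sup>*\<^sup>* y x"
    using symp_rtranclp[OF sym] by (metis sympD)
  ultimately show ?thesis
    unfolding component_def by (auto intro: rtranclp_trans)
qed

lemma component_subset: "x \<in> verts G - B \<Longrightarrow> component G B x \<subseteq> verts G - B"
proof
  fix y assume x: "x \<in> verts G - B" and "y \<in> component G B x"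
  then have "(adj_in G (verts G - B))\<^sup>*\<^sup>* x y" by (simp add: component_def)
  then show "y \<in> verts G - B" using x
    by (induction rule: rtranclp_induct) (auto simp: adj_in_def)
qed

lemma component_eq_if_edge:
  assumes "ordered_graph G" "{u, v} \<in> edges G" "u \<notin> B" "v \<notin> B"
  shows "component G B u = component G B v"
proof -
  have "adj_in G (verts G - B) u v"
    using assms ordered_graph_edge_verts[OF assms(1,2)] by (simp add: adj_in_def)
  then have "v \<in> component G B u" by (simp add: component_def)
  then show ?thesis using component_eq by metis
qed

lemma component_in_components_in:
  "x \<in> verts G - B \<Longrightarrow> component G B x \<in> components_in G (verts G - B)"
  unfolding components_in_def component_def by blast

lemma component_closed_UNIV: "component_closed G B UNIV"
  by (simp add: component_closed_def)

lemma component_closed_Int_vimage: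
  assumes "component_closed G B S"
    and "\<And>x y. x \<in> verts G - B \<Longrightarrow> y \<in> component G B x \<Longrightarrow> f y = f x"
  shows "component_closed G B (S \<inter> f -` I)"
  using assms unfolding component_closed_def by blast

lemma component_closed_remove_base_vertex:
  assumes "component_closed G B S" "b \<in> B"
  shows "component_closed G B (S \<inter> - {b})"
  unfolding component_closed_def
proof
  fix x assume "x \<in> S \<inter> - {b} \<inter> (verts G - B)"
  then show "component G B x \<subseteq> S \<inter> - {b}"
    using assms component_subset[of x G B] unfolding component_closed_def by blast
qed

section \<open>The separating round\<close>

definition attached_to :: "'a ograph \<Rightarrow> 'a set \<Rightarrow> 'a set \<Rightarrow> 'a \<Rightarrow> bool" where
  "attached_to G B S x \<longleftrightarrow> (\<exists>b \<in> S \<inter> B. \<exists>c \<in> component G B x. {b, c} \<in> edges G)"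

definition attached_part :: "'a ograph \<Rightarrow> 'a set \<Rightarrow> 'a set \<Rightarrow> 'a set" where
  "attached_part G B S = {x \<in> S. x \<in> B \<or> attached_to G B S x}"

text \<open>\<open>idx\<close> numbers the components and \<open>h\<close> exceeds the length of Preserver's interval.\<close>
definition separating_layering ::
    "'a ograph \<Rightarrow> 'a set \<Rightarrow> 'a set \<Rightarrow> ('a set \<Rightarrow> nat) \<Rightarrow> int \<Rightarrow> 'a \<Rightarrow> int" where
  "separating_layering G B S idx h x =
     (if x \<in> B \<or> attached_to G B S x then 0 else (int (idx (component G B x)) + 1) * h)"

lemma attached_to_component_eq:
  "y \<in> component G B x \<Longrightarrow> attached_to G B S y = attached_to G B S x"
  unfolding attached_to_def using component_eq by metis

lemma attached_part_Int_base: "attached_part G B S \<inter> B = S \<inter> B"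
  by (auto simp: attached_part_def)

lemma attached_part_empty:
  assumes "ordered_graph G" "verts G \<inter> (S \<inter> B) = {}"
  shows "verts G \<inter> attached_part G B S = {}"
proof -
  have "b \<notin> S \<inter> B" if "{b, c} \<in> edges G" for b c
    using ordered_graph_edge_verts[OF assms(1) that] assms(2) by blast
  then show ?thesis
    using assms(2) unfolding attached_part_def attached_to_def by blast
qed

lemma component_closed_attached_part:
  assumes "component_closed G B S"
  shows "component_closed G B (attached_part G B S)"
  unfolding component_closed_def
proof
  fix x assume "x \<in> attached_part G B S \<inter> (verts G - B)"
  then have "component G B x \<subseteq> S" "attached_to G B S x"
    using assms unfolding component_closed_def attached_part_def by auto
  then show "component G B x \<subseteq> attached_part G B S"
    using attached_to_component_eq[of _ G B x S] unfolding attached_part_def by blast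
qed

lemma separating_layering_component_eq:
  assumes "x \<in> verts G - B" "y \<in> component G B x"
  shows "separating_layering G B S idx h y = separating_layering G B S idx h x"
  using assms component_subset[OF assms(1)] component_eq[OF assms(2)]
    attached_to_component_eq[OF assms(2)]
  by (auto simp: separating_layering_def)

lemma layering_separating_layering:
  assumes og: "ordered_graph G"
  shows "layering (induce G S) (separating_layering G B S idx h)"
  unfolding layering_def
proof (intro allI impI)
  fix u v assume "{u, v} \<in> edges (induce G S)"
  then have e: "{u, v} \<in> edges G" "{v, u} \<in> edges G" and S: "u \<in> S" "v \<in> S"
    by (auto simp: insert_commute)
  consider "u \<in> B" | "v \<in> B" | "u \<notin> B" "v \<notin> B" by blast
  then show "\<bar>separating_layering G B S idx h u - separating_layering G B S idx h v\<bar> \<le> 1"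
  proof cases
    case 1
    then have "attached_to G B S v"
      using e S in_component_self[of v G B] unfolding attached_to_def by blast
    with 1 show ?thesis by (simp add: separating_layering_def)
  next
    case 2
    then have "attached_to G B S u"
      using e S in_component_self[of u G B] unfolding attached_to_def by blast
    with 2 show ?thesis by (simp add: separating_layering_def)
  next
    case 3
    have "v \<in> verts G - B" using ordered_graph_edge_verts[OF og e(1)] 3 by blast
    moreover have "u \<in> component G B v"
      using component_eq_if_edge[OF og e(1) 3] in_component_self[of u G B] by simp
    ultimately show ?thesis
      using separating_layering_component_eq[of v G B u S idx h] by simp
  qed
qed

lemma separating_layering_vimage_zero:
  assumes "0 \<in> {a..<a + int m}" "int m < h"
  shows "S \<inter> separating_layering G B S idx h -` {a..<a + int m} = attached_part G B S"
proof -
  have "a + int m \<le> (int (idx (component G B x)) + 1) * h" for x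
  proof -
    have "0 \<le> int (idx (component G B x)) * h"
      using assms(2) by simp
    moreover have "a \<le> 0" using assms(1) by simp
    ultimately show ?thesis
      using assms(2) unfolding distrib_right by linarith
  qed
  then have outside: "separating_layering G B S idx h x \<notin> {a..<a + int m}"
    if "\<not> (x \<in> B \<or> attached_to G B S x)" for x
    using that by (simp add: separating_layering_def not_less)
  show ?thesis
  proof (intro set_eqI iffI)
    fix x assume "x \<in> S \<inter> separating_layering G B S idx h -` {a..<a + int m}"
    then show "x \<in> attached_part G B S"
      using outside unfolding attached_part_def by blast
  next
    fix x assume "x \<in> attached_part G B S"
    then show "x \<in> S \<inter> separating_layering G B S idx h -` {a..<a + int m}"
      using assms(1) by (auto simp: attached_part_def separating_layering_def)
  qed
qed

lemma separating_layering_vimage_component: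
  assumes og: "ordered_graph G"
    and inj: "inj_on idx (component G B ` (verts G - B))"
    and closed: "component_closed G B S"
    and I: "0 \<notin> {a..<a + int m}" "int m < h"
    and x: "x \<in> verts G \<inter> S" "separating_layering G B S idx h x \<in> {a..<a + int m}"
  shows "x \<in> verts G - B"
    and "induce G (S \<inter> separating_layering G B S idx h -` {a..<a + int m})
           = induce G (component G B x)"
proof -
  let ?lam = "separating_layering G B S idx h"
  have detached: "y \<in> verts G - B \<and> ?lam y = (int (idx (component G B y)) + 1) * h"
    if "y \<in> verts G" "?lam y \<in> {a..<a + int m}" for y
    using that I by (auto simp: separating_layering_def split: if_splits)
  then show x_detached: "x \<in> verts G - B" using x by blast
  have "S \<inter> ?lam -` {a..<a + int m} \<inter> verts G = component G B x \<inter> verts G"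
  proof (intro set_eqI iffI)
    fix y assume y: "y \<in> S \<inter> ?lam -` {a..<a + int m} \<inter> verts G"
    then have "y \<in> verts G - B" using detached by blast
    moreover have "int (idx (component G B y)) + 1 = int (idx (component G B x)) + 1"
      using detached[of x] detached[of y] x y I(2)
      by (intro multiples_in_short_interval_eq[where a = a and m = "int m" and h = h]) auto
    ultimately have "component G B y = component G B x"
      using x_detached inj by (auto dest: inj_onD)
    then show "y \<in> component G B x \<inter> verts G"
      using in_component_self[of y G B] y by auto
  next
    fix y assume y: "y \<in> component G B x \<inter> verts G"
    then have "y \<in> S"
      using closed x x_detached unfolding component_closed_def by blast
    moreover have "?lam y = ?lam x"
      using y x_detached by (blast intro: separating_layering_component_eq)
    ultimately show "y \<in> S \<inter> ?lam -` {a..<a + int m} \<inter> verts G"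
      using x y by simp
  qed
  then show "induce G (S \<inter> ?lam -` {a..<a + int m}) = induce G (component G B x)"
    by (rule induce_cong[OF og])
qed

lemma destroyer_wins_by_separating:
  assumes og: "ordered_graph G"
    and closed: "component_closed G B S"
    and attached: "destroyer_wins (induce G (attached_part G B S)) (tail r) t"
    and components: "\<And>x. x \<in> verts G - B \<Longrightarrow> destroyer_wins (induce G (component G B x)) (tail r) t"
  shows "destroyer_wins (induce G S) r (Suc t)"
proof -
  have "finite (component G B ` (verts G - B))"
    using og by (simp add: ordered_graph_def)
  then obtain idx :: "'a set \<Rightarrow> nat" where
    inj: "inj_on idx (component G B ` (verts G - B))"
    using finite_imp_inj_to_nat_seg by metis
  define lam where "lam = separating_layering G B S idx (int (head r) + 1)"
  have "destroyer_wins (induce G (S \<inter> lam -` {a..<a + int m})) (tail r) t"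
    if "m \<le> head r" for a m
  proof (cases "0 \<in> {a..<a + int m}")
    case True
    with that have "S \<inter> lam -` {a..<a + int m} = attached_part G B S"
      unfolding lam_def by (intro separating_layering_vimage_zero) auto
    with attached show ?thesis by simp
  next
    case zero_outside: False
    show ?thesis
    proof (cases "verts G \<inter> (S \<inter> lam -` {a..<a + int m}) = {}")
      case True
      then show ?thesis by (simp add: destroyer_wins_if_empty)
    next
      case nonempty: False
      then obtain x where x: "x \<in> verts G \<inter> S" "lam x \<in> {a..<a + int m}" by blast
      have "int m < int (head r) + 1" using that by simp
      note separated = separating_layering_vimage_component[OF og inj closed zero_outside this
          x[unfolded lam_def]]
      show ?thesis using separated components unfolding lam_def by simp
    qed
  qed
  moreover have "layering (induce G S) lam"
    unfolding lam_def by (rule layering_separating_layering[OF og])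
  ultimately show ?thesis
    unfolding destroyer_wins.simps(2) induce_induce by blast
qed

section \<open>Copying the strategy for the base\<close>

definition extend_layering ::
    "'a ograph \<Rightarrow> 'a set \<Rightarrow> 'a set \<Rightarrow> ('a \<Rightarrow> int) \<Rightarrow> 'a \<Rightarrow> int" where
  "extend_layering G B S lam x = (if x \<in> B then lam x
     else lam (SOME b. b \<in> S \<inter> B \<and> (\<exists>c \<in> component G B x. {b, c} \<in> edges G)))"

lemma extend_layering_component_eq:
  assumes "x \<in> verts G - B" "y \<in> component G B x"
  shows "extend_layering G B S lam y = extend_layering G B S lam x"
  using assms component_subset[OF assms(1)] component_eq[OF assms(2)]
  by (auto simp: extend_layering_def)

locale base_decomposition =
  fixes G :: "('a::linorder) ograph" and B :: "'a set"
  assumes ordered_graph: "ordered_graph G"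
    and attach_clique: "\<And>x. x \<in> verts G - B \<Longrightarrow> is_clique G (attach G B (component G B x))"
    and attach_less: "\<And>x b y. x \<in> verts G - B \<Longrightarrow> b \<in> attach G B (component G B x) \<Longrightarrow>
                          y \<in> component G B x \<Longrightarrow> b < y"
begin

lemma Min_attached_part_in_base:
  assumes ne: "verts G \<inter> attached_part G B S \<noteq> {}"
  shows "Min (verts G \<inter> attached_part G B S) \<in> B"
proof (rule ccontr)
  let ?m = "Min (verts G \<inter> attached_part G B S)"
  have fin: "finite (verts G \<inter> attached_part G B S)"
    using ordered_graph by (simp add: ordered_graph_def)
  have m: "?m \<in> verts G \<inter> attached_part G B S" using Min_in[OF fin ne] .
  assume "?m \<notin> B"
  with m obtain b c where b: "b \<in> S \<inter> B" "c \<in> component G B ?m" "{b, c} \<in> edges G"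
    unfolding attached_part_def attached_to_def by blast
  have "b \<in> attach G B (component G B ?m)"
    unfolding attach_def using b by blast
  moreover have "?m \<in> verts G - B" using m \<open>?m \<notin> B\<close> by blast
  ultimately have "b < ?m"
    using attach_less in_component_self by metis
  moreover have "b \<in> verts G \<inter> attached_part G B S"
    using b ordered_graph_edge_verts[OF ordered_graph b(3)] by (simp add: attached_part_def)
  then have "?m \<le> b" using Min_le[OF fin] by blast
  ultimately show False by simp
qed

lemma Min_base_eq_Min_attached_part:
  assumes "verts G \<inter> attached_part G B S \<noteq> {}"
  shows "Min (verts G \<inter> (S \<inter> B)) = Min (verts G \<inter> attached_part G B S)"
proof -
  have fin: "finite (verts G \<inter> attached_part G B S)"
    using ordered_graph by (simp add: ordered_graph_def)
  have sub: "verts G \<inter> (S \<inter> B) \<subseteq> verts G \<inter> attached_part G B S"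
    using attached_part_Int_base[of G B S] by blast
  show ?thesis
  proof (rule Min_eqI[OF finite_subset[OF sub fin]])
    show "Min (verts G \<inter> attached_part G B S) \<in> verts G \<inter> (S \<inter> B)"
      using Min_in[OF fin assms] Min_attached_part_in_base[OF assms]
        attached_part_Int_base[of G B S] by blast
  qed (use sub Min_le[OF fin] in blast)
qed

text \<open>Any two attachment vertices of a component are adjacent, so it does not matter which
one the component takes its layer from.\<close>
lemma layering_extend_layering:
  assumes base_layering: "layering (induce G (S \<inter> B)) lam"
  shows "layering (induce G S) (extend_layering G B S lam)"
  unfolding layering_def
proof (intro allI impI)
  let ?mu = "extend_layering G B S lam"
  have base_component: "\<bar>?mu u - ?mu v\<bar> \<le> 1"
    if e: "{u, v} \<in> edges G" and S: "u \<in> S" and u: "u \<in> B" and v: "v \<notin> B" for u v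
  proof -
    let ?P = "\<lambda>b. b \<in> S \<inter> B \<and> (\<exists>c \<in> component G B v. {b, c} \<in> edges G)"
    have Pu: "?P u" using S u e in_component_self[of v G B] by blast
    define b where "b = (SOME b. ?P b)"
    have Pb: "?P b" unfolding b_def using someI[of ?P, OF Pu] .
    have "v \<in> verts G - B" using ordered_graph_edge_verts[OF ordered_graph e] v by auto
    moreover have "u \<in> attach G B (component G B v)" "b \<in> attach G B (component G B v)"
      unfolding attach_def using Pu Pb by blast+
    ultimately have "u = b \<or> {u, b} \<in> edges G"
      using attach_clique unfolding is_clique_def by blast
    then have "\<bar>lam u - lam b\<bar> \<le> 1"
      using base_layering Pu Pb unfolding layering_def by auto
    then show ?thesis using u v by (simp add: extend_layering_def b_def)
  qed
  fix u v assume "{u, v} \<in> edges (induce G S)"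
  then have e: "{u, v} \<in> edges G" "{v, u} \<in> edges G" and S: "u \<in> S" "v \<in> S"
    by (auto simp: insert_commute)
  consider "u \<in> B" "v \<in> B" | "u \<in> B" "v \<notin> B" | "u \<notin> B" "v \<in> B" | "u \<notin> B" "v \<notin> B"
    by blast
  then show "\<bar>?mu u - ?mu v\<bar> \<le> 1"
  proof cases
    case 1
    then show ?thesis
      using base_layering e S unfolding layering_def by (simp add: extend_layering_def)
  next
    case 2
    then show ?thesis using base_component e S by blast
  next
    case 3
    then show ?thesis using base_component[of v u] e S by linarith
  next
    case 4
    then show ?thesis
      using component_eq_if_edge[OF ordered_graph e(1)] by (simp add: extend_layering_def)
  qed
qed

lemma destroyer_wins_attached_part_by_base_strategy:
  assumes closed: "component_closed G B S"
    and base: "destroyer_wins (induce G (S \<inter> B)) q (Suc t)"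
    and head: "head p \<le> head q"
    and continue: "\<And>S'. component_closed G B S' \<Longrightarrow>
        destroyer_wins (induce G (S' \<inter> B)) (tail q) t \<Longrightarrow> destroyer_wins (induce G S') (tail p) M"
  shows "destroyer_wins (induce G (attached_part G B S)) p (Suc M)"
proof (cases "verts G \<inter> attached_part G B S = {}")
  case True
  then show ?thesis by (simp add: destroyer_wins_if_empty)
next
  case nonempty: False
  let ?A = "attached_part G B S"
  let ?m = "Min (verts G \<inter> ?A)"
  have A_closed: "component_closed G B ?A"
    using component_closed_attached_part[OF closed] .
  from base consider
      (empty) "verts G \<inter> (S \<inter> B) = {}"
    | (delete) "destroyer_wins (delete_min (induce G (S \<inter> B))) (tail q) t"
    | (restrict) lam where "layering (induce G (S \<inter> B)) lam"
        "\<And>a m. m \<le> head q \<Longrightarrow>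
           destroyer_wins (induce G (S \<inter> B \<inter> lam -` {a..<a + int m})) (tail q) t"
    by auto
  then show ?thesis
  proof cases
    case empty
    then show ?thesis using attached_part_empty[OF ordered_graph] nonempty by simp
  next
    case delete
    have "S \<inter> B \<inter> - {?m} = (?A \<inter> - {?m}) \<inter> B"
      using attached_part_Int_base[of G B S] by blast
    then have "delete_min (induce G (S \<inter> B)) = induce G ((?A \<inter> - {?m}) \<inter> B)"
      by (simp only: delete_min_induce Min_base_eq_Min_attached_part[OF nonempty])
    with delete have "destroyer_wins (induce G ((?A \<inter> - {?m}) \<inter> B)) (tail q) t"
      by simp
    then have "destroyer_wins (induce G (?A \<inter> - {?m})) (tail p) M"
      by (intro continue component_closed_remove_base_vertex[OF A_closed]
          Min_attached_part_in_base[OF nonempty])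
    then show ?thesis
      unfolding destroyer_wins.simps(2) delete_min_induce by blast
  next
    case restrict
    let ?mu = "extend_layering G B ?A lam"
    have "destroyer_wins (induce G (?A \<inter> ?mu -` {a..<a + int m})) (tail p) M"
      if "m \<le> head p" for a m
    proof (rule continue)
      show "component_closed G B (?A \<inter> ?mu -` {a..<a + int m})"
        by (rule component_closed_Int_vimage[OF A_closed extend_layering_component_eq])
      have "?A \<inter> ?mu -` {a..<a + int m} \<inter> B = S \<inter> B \<inter> lam -` {a..<a + int m}"
        using attached_part_Int_base[of G B S] by (auto simp: extend_layering_def)
      then show "destroyer_wins (induce G (?A \<inter> ?mu -` {a..<a + int m} \<inter> B)) (tail q) t"
        using restrict(2) that head by simp
    qed
    moreover have "layering (induce G ?A) ?mu"
      using layering_extend_layering[of ?A lam] restrict(1) attached_part_Int_base[of G B S]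
      by simp
    ultimately show ?thesis
      unfolding destroyer_wins.simps(2) induce_induce by blast
  qed
qed

text \<open>Rounds alternate between separating and copying the base strategy, so the base strategy
is run against the odd terms of \<open>r\<close>, and the strategy on a component may start after any
of the first \<open>2 t\<^sub>1 + 2\<close> rounds.\<close>
lemma destroyer_wins_component_closed:
  assumes "component_closed G B S"
    and "destroyer_wins (induce G (S \<inter> B)) (\<lambda>j. r (2 * j + 1)) t\<^sub>1"
    and "\<And>k x. k \<le> 2 * t\<^sub>1 + 1 \<Longrightarrow> x \<in> verts G - B \<Longrightarrow>
            destroyer_wins (induce G (component G B x)) (\<lambda>i. r (i + k)) N"
  shows "destroyer_wins (induce G S) r (2 * t\<^sub>1 + 1 + N)"
  using assms
proof (induction t\<^sub>1 arbitrary: S r)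
  case 0
  have "verts G \<inter> attached_part G B S = {}"
    using attached_part_empty[OF ordered_graph] "0.prems"(2) by simp
  then have "destroyer_wins (induce G (attached_part G B S)) (tail r) N"
    by (simp add: destroyer_wins_if_empty)
  moreover have "destroyer_wins (induce G (component G B x)) (tail r) N"
    if "x \<in> verts G - B" for x
    using "0.prems"(3)[of 1 x] that by (simp add: tail_def)
  ultimately show ?case
    using destroyer_wins_by_separating[OF ordered_graph "0.prems"(1)] by simp
next
  case (Suc t)
  have "destroyer_wins (induce G (attached_part G B S)) (tail r) (Suc (2 * t + 1 + N))"
  proof (rule destroyer_wins_attached_part_by_base_strategy[OF Suc.prems(1,2)])
    show "head (tail r) \<le> head (\<lambda>j. r (2 * j + 1))"
      by (simp add: head_def tail_def)
    fix S' assume closed: "component_closed G B S'"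
      and base: "destroyer_wins (induce G (S' \<inter> B)) (tail (\<lambda>j. r (2 * j + 1))) t"
    show "destroyer_wins (induce G S') (tail (tail r)) (2 * t + 1 + N)"
    proof (rule Suc.IH[OF closed])
      show "destroyer_wins (induce G (S' \<inter> B)) (\<lambda>j. tail (tail r) (2 * j + 1)) t"
        using base by (simp add: tail_def)
      fix k x assume "k \<le> 2 * t + 1" "x \<in> verts G - B"
      then show "destroyer_wins (induce G (component G B x)) (\<lambda>i. tail (tail r) (i + k)) N"
        using Suc.prems(3)[of "k + 2" x] by (simp add: tail_def add.assoc)
    qed
  qed
  moreover have "destroyer_wins (induce G (component G B x)) (tail r) (Suc (2 * t + 1 + N))"
    if "x \<in> verts G - B" for x
  proof (rule destroyer_wins_mono)
    show "destroyer_wins (induce G (component G B x)) (tail r) N"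
      using Suc.prems(3)[of 1 x] that by (simp add: tail_def)
  qed simp
  ultimately have "destroyer_wins (induce G S) r (Suc (Suc (2 * t + 1 + N)))"
    by (rule destroyer_wins_by_separating[OF ordered_graph Suc.prems(1)])
  then show ?case by simp
qed

end

lemma oplus_obtains_base_decomposition:
  assumes "G \<in> oplus C1 C2"
  obtains B where "base_decomposition G B" "induce G B \<in> C1"
    "\<And>x. x \<in> verts G - B \<Longrightarrow> induce G (component G B x) \<in> C2"
proof -
  from assms obtain B where "ordered_graph G" "induce G B \<in> C1"
    and comps: "\<forall>C\<in>components_in G (verts G - B). induce G C \<in> C2 \<and>
        is_clique G (attach G B C) \<and> (\<forall>x\<in>attach G B C. \<forall>y\<in>C. x < y)"
    unfolding oplus_def by blast
  have component: "induce G (component G B x) \<in> C2 \<and> is_clique G (attach G B (component G B x)) \<and>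
      (\<forall>b\<in>attach G B (component G B x). \<forall>y\<in>component G B x. b < y)"
    if "x \<in> verts G - B" for x
    using comps component_in_components_in[OF that] by blast
  have "base_decomposition G B"
    using \<open>ordered_graph G\<close> by unfold_locales (simp_all add: component)
  with \<open>induce G B \<in> C1\<close> component show ?thesis using that by blast
qed

lemma baker_classD: "baker_class C \<Longrightarrow> \<forall>i. 0 < r i \<Longrightarrow> \<exists>t. \<forall>H\<in>C. destroyer_wins H r t"
  unfolding baker_class_def by blast

lemma baker_class_uniform_over_shifts:
  assumes "baker_class C" "\<forall>i. 0 < r i"
  obtains N where "\<And>k H. k \<le> K \<Longrightarrow> H \<in> C \<Longrightarrow> destroyer_wins H (\<lambda>i. r (i + k)) N"
proof -
  have "\<exists>t. \<forall>H\<in>C. destroyer_wins H (\<lambda>i. r (i + k)) t" for k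
    using baker_classD[OF assms(1), of "\<lambda>i. r (i + k)"] assms(2) by simp
  then obtain T where T: "\<And>k. \<forall>H\<in>C. destroyer_wins H (\<lambda>i. r (i + k)) (T k)"
    by metis
  have "destroyer_wins H (\<lambda>i. r (i + k)) (Max (T ` {..K}))" if "k \<le> K" "H \<in> C" for k H
    using T[of k] that destroyer_wins_mono[of H _ "T k"] by simp
  then show ?thesis using that by blast
qed

theorem mainTheorem6:
  fixes C1 C2 :: "('a::linorder) ograph set"
  assumes "\<forall>G\<in>C1. ordered_graph G" and "\<forall>G\<in>C2. ordered_graph G"
    and "baker_class C1" and "baker_class C2"
  shows "baker_class (oplus C1 C2)"
  unfolding baker_class_def
proof (intro allI impI)
  fix r :: "nat \<Rightarrow> nat" assume r: "\<forall>i. 0 < r i"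
  obtain t\<^sub>1 where t\<^sub>1: "\<forall>H\<in>C1. destroyer_wins H (\<lambda>j. r (2 * j + 1)) t\<^sub>1"
    using baker_classD[OF assms(3), of "\<lambda>j. r (2 * j + 1)"] r by auto
  obtain N where N: "\<And>k H. k \<le> 2 * t\<^sub>1 + 1 \<Longrightarrow> H \<in> C2 \<Longrightarrow> destroyer_wins H (\<lambda>i. r (i + k)) N"
    using baker_class_uniform_over_shifts[OF assms(4) r] by blast
  have "destroyer_wins G r (2 * t\<^sub>1 + 1 + N)" if G: "G \<in> oplus C1 C2" for G
  proof -
    obtain B where decomposition: "base_decomposition G B" and base: "induce G B \<in> C1"
      and components: "\<And>x. x \<in> verts G - B \<Longrightarrow> induce G (component G B x) \<in> C2"
      using oplus_obtains_base_decomposition[OF G] by blast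
    have "destroyer_wins (induce G UNIV) r (2 * t\<^sub>1 + 1 + N)"
    proof (rule base_decomposition.destroyer_wins_component_closed[OF decomposition
          component_closed_UNIV])
      show "destroyer_wins (induce G (UNIV \<inter> B)) (\<lambda>j. r (2 * j + 1)) t\<^sub>1"
        using t\<^sub>1 base by simp
    qed (use N components in blast)
    then show ?thesis by simp
  qed
  then show "\<exists>t. \<forall>G\<in>oplus C1 C2. destroyer_wins G r t" by blast
qed

end
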